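(* Let $P,Q\in\mathbb P_d$ and let $R=\big[\gamma^{\mathrm{BW}}_{P^{-1}Q^{-1}}(t)\big]^{-1}$ for some $t\in[0,1]$. Then $\operatorname{F}_R(P,Q)=\operatorname{F}^{\mathrm U}(P,Q)$.
   Context: $\mathbb P_d$ is the set of $d\times d$ complex positive definite matrices; $A\#B:=A^{1/2}(A^{-1/2}BA^{-1/2})^{1/2}A^{1/2}$. The Bures–Wasserstein geodesic between $A,B\in\mathbb P_d$ is $\gamma^{\mathrm{BW}}_{AB}(t):=[(1-t)\mathbb I+t\,A^{-1}\#B]\,A\,[(1-t)\mathbb I+t\,A^{-1}\#B]$, $t\in[0,1]$. The generalized fidelity is $\operatorname{F}_R(P,Q):=\operatorname{Tr}\big[\sqrt{R^{1/2}PR^{1/2}}\,R^{-1}\sqrt{R^{1/2}QR^{1/2}}\big]$ and the Uhlmann fidelity is $\operatorname{F}^{\mathrm U}(P,Q):=\operatorname{Tr}\sqrt{P^{1/2}QP^{1/2}}$. *)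

theory Defs
  imports "HOL-Analysis.Analysis"
begin

definition adjoint_mat :: "complex^'d^'d \<Rightarrow> complex^'d^'d" where
  "adjoint_mat A = (\<chi> i j. cnj (A $ j $ i))"

definition hermitian_mat :: "complex^'d^'d \<Rightarrow> bool" where
  "hermitian_mat A \<longleftrightarrow> adjoint_mat A = A"

definition qform :: "complex^'d^'d \<Rightarrow> complex^'d \<Rightarrow> complex" where
  "qform A x = (\<Sum>i\<in>UNIV. cnj (x $ i) * (A *v x) $ i)"

definition pos_def_mat :: "complex^'d^'d \<Rightarrow> bool" where
  "pos_def_mat A \<longleftrightarrow> hermitian_mat A \<and> (\<forall>x. x \<noteq> 0 \<longrightarrow> Re (qform A x) > 0)"

definition pos_semidef_mat :: "complex^'d^'d \<Rightarrow> bool" where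
  "pos_semidef_mat A \<longleftrightarrow> hermitian_mat A \<and> (\<forall>x. Re (qform A x) \<ge> 0)"

definition mat_sqrt :: "complex^'d^'d \<Rightarrow> complex^'d^'d" where
  "mat_sqrt A = (THE B. pos_semidef_mat B \<and> B ** B = A)"

definition geo_mean :: "complex^'d^'d \<Rightarrow> complex^'d^'d \<Rightarrow> complex^'d^'d" where
  "geo_mean A B = (let Ah = mat_sqrt A; Aih = matrix_inv (mat_sqrt A)
                   in Ah ** mat_sqrt (Aih ** B ** Aih) ** Ah)"

definition bw_geodesic :: "complex^'d^'d \<Rightarrow> complex^'d^'d \<Rightarrow> real \<Rightarrow> complex^'d^'d" where
  "bw_geodesic A B t =
     (let M = (1 - t) *\<^sub>R mat 1 + t *\<^sub>R geo_mean (matrix_inv A) B in M ** A ** M)"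

definition gen_fidelity :: "complex^'d^'d \<Rightarrow> complex^'d^'d \<Rightarrow> complex^'d^'d \<Rightarrow> complex" where
  "gen_fidelity R P Q =
     trace (mat_sqrt (mat_sqrt R ** P ** mat_sqrt R) ** matrix_inv R
            ** mat_sqrt (mat_sqrt R ** Q ** mat_sqrt R))"

definition uhlmann_fidelity :: "complex^'d^'d \<Rightarrow> complex^'d^'d \<Rightarrow> complex" where
  "uhlmann_fidelity P Q = trace (mat_sqrt (mat_sqrt P ** Q ** mat_sqrt P))"

end

theory Submission
  imports Defs
begin

text \<open>
  Put T = P # Q\<inverse>. The Riccati equation T P\<inverse> T = Q\<inverse> of the geometric mean gives
  Q = T\<inverse> P T\<inverse>, and the geodesic at t is M P\<inverse> M with M = (1 - t) I + t T, so that
  R = M\<inverse> P M\<inverse>. Hence P = M R M and Q = N R N with the positive matrix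
  N = T\<inverse> M = (1 - t) T\<inverse> + t I. Whenever P = M R M with M positive, the outer square root
  in F_R is explicit, (R^(1/2) P R^(1/2))^(1/2) = R^(1/2) M R^(1/2); therefore
  F_R(P,Q) = tr (R M N) = tr (P T\<inverse>), and the same computation for Q = T\<inverse> P T\<inverse> gives
  F^U(P,Q) = tr (P T\<inverse>).
  Positive square roots exist and are unique by the spectral theorem for Hermitian matrices,
  obtained by maximising the Rayleigh quotient on invariant subspaces.
\<close>

section \<open>Complex inner product and quadratic forms\<close>

definition cinner :: "complex^'n \<Rightarrow> complex^'n \<Rightarrow> complex" where
  "cinner x y = (\<Sum>i\<in>UNIV. cnj (x $ i) * y $ i)"

lemma cinner_add_right: "cinner x (y + z) = cinner x y + cinner x z"
  by (simp add: cinner_def distrib_left sum.distrib)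

lemma cinner_add_left: "cinner (x + y) z = cinner x z + cinner y z"
  by (simp add: cinner_def distrib_right sum.distrib)

lemma cinner_diff_right: "cinner x (y - z) = cinner x y - cinner x z"
  by (simp add: cinner_def right_diff_distrib sum_subtractf)

lemma cinner_diff_left: "cinner (x - y) z = cinner x z - cinner y z"
  by (simp add: cinner_def left_diff_distrib sum_subtractf)

lemma cinner_scale_right: "cinner x (c *s y) = c * cinner x y"
  by (simp add: cinner_def sum_distrib_left algebra_simps)

lemma cinner_scale_left: "cinner (c *s x) y = cnj c * cinner x y"
  by (simp add: cinner_def sum_distrib_left algebra_simps)

lemma scaleR_vec_eq_smult: "c *\<^sub>R x = complex_of_real c *s (x :: complex^'n)"
  by (simp add: vec_eq_iff of_real_def)

lemma cinner_zero_right [simp]: "cinner x 0 = 0"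
  by (simp add: cinner_def)

lemma cinner_zero_left [simp]: "cinner 0 x = 0"
  by (simp add: cinner_def)

lemma cinner_sum_right: "cinner x (\<Sum>e\<in>E. f e) = (\<Sum>e\<in>E. cinner x (f e))"
  by (induct E rule: infinite_finite_induct) (auto simp: cinner_add_right)

lemma cinner_sum_left: "cinner (\<Sum>e\<in>E. f e) x = (\<Sum>e\<in>E. cinner (f e) x)"
  by (induct E rule: infinite_finite_induct) (auto simp: cinner_add_left)

lemma cnj_cinner: "cnj (cinner x y) = cinner y x"
  by (simp add: cinner_def mult.commute)

lemma cinner_self: "cinner x x = of_real ((norm x)\<^sup>2)"
proof -
  have "cinner x x = (\<Sum>i\<in>UNIV. of_real ((norm (x $ i))\<^sup>2))"
    unfolding cinner_def
    by (intro sum.cong refl) (simp add: complex_norm_square mult.commute del: of_real_power)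
  also have "\<dots> = of_real ((norm x)\<^sup>2)"
    by (simp add: norm_vec_def L2_set_def sum_nonneg)
  finally show ?thesis .
qed

lemma cinner_self_eq_0 [simp]: "cinner x x = 0 \<longleftrightarrow> x = 0"
  by (simp add: cinner_self)

lemma matrix_vector_mult_scale:
  fixes A :: "complex^'n^'m"
  shows "A *v (c *s z) = c *s (A *v z)"
  by (simp add: vec_eq_iff matrix_vector_mult_def sum_distrib_left ac_simps)

lemma matrix_vector_mult_sum:
  fixes A :: "complex^'n^'m"
  shows "A *v (\<Sum>u\<in>S. f u) = (\<Sum>u\<in>S. A *v f u)"
  by (induct S rule: infinite_finite_induct) (auto simp: matrix_vector_right_distrib)

lemma cinner_adjoint: "cinner x (A *v y) = cinner (adjoint_mat A *v x) y"
proof -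
  have "cinner x (A *v y) = (\<Sum>i\<in>UNIV. \<Sum>j\<in>UNIV. cnj (x $ i) * A $ i $ j * y $ j)"
    unfolding cinner_def matrix_vector_mult_def by (simp add: sum_distrib_left mult.assoc)
  also have "\<dots> = (\<Sum>j\<in>UNIV. \<Sum>i\<in>UNIV. cnj (x $ i) * A $ i $ j * y $ j)"
    by (rule sum.swap)
  also have "\<dots> = cinner (adjoint_mat A *v x) y"
    unfolding cinner_def matrix_vector_mult_def adjoint_mat_def
    by (simp add: sum_distrib_left cnj_sum mult.commute mult.left_commute)
  finally show ?thesis .
qed

lemma matrix_eq_cinner: "(\<And>x y. cinner x (A *v y) = cinner x (B *v y)) \<Longrightarrow> A = B"
proof -
  assume eq: "\<And>x y. cinner x (A *v y) = cinner x (B *v y)"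
  have "A *v y = B *v y" for y
  proof -
    have "cinner (A *v y - B *v y) (A *v y - B *v y) = 0"
      using eq by (simp add: cinner_diff_right cinner_diff_left)
    then show ?thesis by simp
  qed
  then show ?thesis by (simp add: matrix_eq)
qed

lemma hermitian_cinner: "hermitian_mat A \<Longrightarrow> cinner x (A *v y) = cinner (A *v x) y"
  by (simp add: cinner_adjoint hermitian_mat_def)

lemma hermitian_iff_cinner:
  "hermitian_mat A \<longleftrightarrow> (\<forall>x y. cinner x (A *v y) = cinner (A *v x) y)"
proof
  assume "\<forall>x y. cinner x (A *v y) = cinner (A *v x) y"
  then have "cinner x (adjoint_mat A *v y) = cinner x (A *v y)" for x y
    by (metis cinner_adjoint cnj_cinner)
  then show "hermitian_mat A"
    unfolding hermitian_mat_def by (rule matrix_eq_cinner)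
qed (simp add: hermitian_cinner)

lemma qform_eq_cinner: "qform A x = cinner x (A *v x)"
  by (simp add: qform_def cinner_def)

lemma hermitian_qform_real: "hermitian_mat A \<Longrightarrow> qform A x = of_real (Re (qform A x))"
proof -
  assume "hermitian_mat A"
  then have "cnj (qform A x) = qform A x"
    by (simp add: qform_eq_cinner cnj_cinner hermitian_cinner)
  then show ?thesis by (simp add: complex_eq_iff)
qed

lemma qform_scale: "qform A (c *s z) = cnj c * c * qform A z"
  by (simp add: qform_eq_cinner matrix_vector_mult_scale cinner_scale_left cinner_scale_right)

lemma qform_add: "qform (A + B) x = qform A x + qform B x"
  by (simp add: qform_eq_cinner matrix_vector_mult_add_rdistrib cinner_add_right)

lemma qform_scaleR: "qform (r *\<^sub>R A) x = of_real r * qform A x"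
proof -
  have "(r *\<^sub>R A) *v x = r *\<^sub>R (A *v x)"
    by (simp add: vec_eq_iff matrix_vector_mult_def scaleR_sum_right)
  then show ?thesis by (simp add: qform_eq_cinner scaleR_vec_eq_smult cinner_scale_right)
qed

lemma adjoint_mat_mult: "adjoint_mat (A ** B) = adjoint_mat B ** adjoint_mat A"
  by (simp add: adjoint_mat_def matrix_matrix_mult_def vec_eq_iff cnj_sum mult.commute)

lemma adjoint_mat_1 [simp]: "adjoint_mat (mat 1) = mat 1"
  by (simp add: adjoint_mat_def vec_eq_iff mat_def)

lemma adjoint_mat_add: "adjoint_mat (A + B) = adjoint_mat A + adjoint_mat B"
  by (simp add: adjoint_mat_def vec_eq_iff)

lemma adjoint_mat_scaleR: "adjoint_mat (r *\<^sub>R A) = r *\<^sub>R adjoint_mat A"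
  by (simp add: adjoint_mat_def vec_eq_iff)

section \<open>Spectral theorem for Hermitian matrices\<close>

lemma quadratic_nonpos_imp_linear_coeff_0:
  fixes a c :: real
  assumes a: "a \<ge> 0" and nonpos: "\<And>s. 2 * s * a + s\<^sup>2 * c \<le> 0"
  shows "a = 0"
proof (rule ccontr)
  assume "a \<noteq> 0"
  with a have apos: "a > 0" by simp
  define s where "s = a / (\<bar>c\<bar> + 1)"
  have spos: "s > 0" using apos by (simp add: s_def)
  have "s * \<bar>c\<bar> < a" using apos by (simp add: s_def field_simps)
  then have "s\<^sup>2 * \<bar>c\<bar> < s * a"
    using spos by (simp add: power2_eq_square mult.assoc)
  moreover have "- (s\<^sup>2 * \<bar>c\<bar>) \<le> s\<^sup>2 * c"
    using mult_left_mono[of "- \<bar>c\<bar>" c "s\<^sup>2"] by simp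
  moreover have "s * a > 0" using spos apos by simp
  ultimately show False using nonpos[of s] by linarith
qed

lemma hermitian_rayleigh_max_eigenvector:
  fixes A :: "complex^'n^'n"
  assumes herm: "hermitian_mat A" and W: "subspace W"
    and invariant: "\<And>z. z \<in> W \<Longrightarrow> A *v z \<in> W"
    and x: "x \<in> W" "norm x = 1"
    and max: "\<And>z. z \<in> W \<Longrightarrow> Re (qform A z) \<le> Re (qform A x) * (norm z)\<^sup>2"
  shows "A *v x = Re (qform A x) *\<^sub>R x"
proof -
  define lam where "lam = Re (qform A x)"
  define v where "v = A *v x - lam *\<^sub>R x"
  have vW: "v \<in> W"
    unfolding v_def using W x invariant by (simp add: subspace_diff subspace_scale)
  have xx: "cinner x x = 1" using x by (simp add: cinner_self)
  have xAx: "cinner x (A *v x) = of_real lam"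
    using hermitian_qform_real[OF herm] by (simp add: lam_def qform_eq_cinner)
  have Ax: "A *v x = v + lam *\<^sub>R x" by (simp add: v_def)
  have xv: "cinner x v = 0"
    by (simp add: v_def cinner_diff_right scaleR_vec_eq_smult cinner_scale_right xx xAx)
  then have vx: "cinner v x = 0" by (metis cnj_cinner complex_cnj_zero)
  have xAv: "cinner x (A *v v) = cinner v v"
    using hermitian_cinner[OF herm, of x v]
    by (simp add: Ax cinner_add_left scaleR_vec_eq_smult cinner_scale_left xv)
  have vAx: "cinner v (A *v x) = cinner v v"
    by (simp add: Ax cinner_add_right scaleR_vec_eq_smult cinner_scale_right vx)
  \<comment> \<open>maximality at \<open>x\<close> in the direction \<open>v \<bottom> x\<close>; the first-order term forces \<open>v = 0\<close>\<close>
  have "2 * s * (norm v)\<^sup>2 + s\<^sup>2 * (Re (qform A v) - lam * (norm v)\<^sup>2) \<le> 0" for s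
  proof -
    define z where "z = x + s *\<^sub>R v"
    have "qform A z = of_real lam + 2 * of_real s * cinner v v + of_real s * of_real s * qform A v"
      unfolding z_def qform_eq_cinner
      by (simp add: scaleR_vec_eq_smult matrix_vector_right_distrib matrix_vector_mult_scale
          cinner_add_left cinner_add_right cinner_scale_left cinner_scale_right xAv vAx xAx
          algebra_simps)
    then have "Re (qform A z) = lam + 2 * s * (norm v)\<^sup>2 + s\<^sup>2 * Re (qform A v)"
      by (simp add: cinner_self power2_eq_square)
    moreover have "cinner z z = 1 + of_real s * of_real s * cinner v v"
      unfolding z_def
      by (simp add: scaleR_vec_eq_smult cinner_add_left cinner_add_right cinner_scale_left
          cinner_scale_right xx xv vx)
    then have "Re (cinner z z) = 1 + s\<^sup>2 * (norm v)\<^sup>2"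
      by (simp add: cinner_self power2_eq_square)
    then have "(norm z)\<^sup>2 = 1 + s\<^sup>2 * (norm v)\<^sup>2"
      by (simp add: cinner_self)
    moreover have "z \<in> W" unfolding z_def using W x vW by (simp add: subspace_add subspace_scale)
    ultimately show ?thesis using max[of z] by (simp add: lam_def algebra_simps)
  qed
  then have "(norm v)\<^sup>2 = 0" by (intro quadratic_nonpos_imp_linear_coeff_0) simp_all
  then show ?thesis by (simp add: Ax lam_def)
qed

lemma hermitian_eigenvector_in_invariant_subspace:
  fixes A :: "complex^'n^'n"
  assumes herm: "hermitian_mat A" and W: "subspace W"
    and invariant: "\<And>z. z \<in> W \<Longrightarrow> A *v z \<in> W" and w: "w \<in> W" "w \<noteq> 0"
  obtains x \<mu> where "x \<in> W" "norm x = 1" "A *v x = \<mu> *\<^sub>R x"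
proof -
  define K where "K = W \<inter> sphere 0 1"
  have "compact K"
    unfolding K_def by (intro closed_Int_compact closed_subspace W compact_sphere)
  moreover have "(1 / norm w) *\<^sub>R w \<in> K"
    unfolding K_def using w W by (simp add: subspace_scale)
  moreover have "continuous_on K (\<lambda>z. Re (qform A z))"
    unfolding qform_def matrix_vector_mult_def by (intro continuous_intros)
  ultimately obtain x where xK: "x \<in> K"
    and xmax: "\<And>y. y \<in> K \<Longrightarrow> Re (qform A y) \<le> Re (qform A x)"
    using continuous_attains_sup by (metis empty_iff)
  have "Re (qform A z) \<le> Re (qform A x) * (norm z)\<^sup>2" if z: "z \<in> W" for z
  proof (cases "z = 0")
    case True
    then show ?thesis by (simp add: qform_def)
  next
    case False
    then have "(1 / norm z) *\<^sub>R z \<in> K"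
      unfolding K_def using W z by (simp add: subspace_scale)
    then have "Re (qform A ((1 / norm z) *\<^sub>R z)) \<le> Re (qform A x)"
      by (rule xmax)
    moreover have "qform A ((1 / norm z) *\<^sub>R z) = of_real (1 / (norm z)\<^sup>2) * qform A z"
      by (simp add: scaleR_vec_eq_smult qform_scale power2_eq_square)
    ultimately have "Re (qform A z) / (norm z)\<^sup>2 \<le> Re (qform A x)"
      by simp
    then show ?thesis using False by (simp add: divide_le_eq mult.commute)
  qed
  moreover have "x \<in> W" "norm x = 1" using xK by (auto simp: K_def)
  ultimately show thesis
    using that hermitian_rayleigh_max_eigenvector[OF herm W invariant] by blast
qed

definition orthonormal_set :: "(complex^'n) set \<Rightarrow> bool" where
  "orthonormal_set S \<longleftrightarrow>
     (\<forall>u\<in>S. norm u = 1) \<and> (\<forall>u\<in>S. \<forall>v\<in>S. u \<noteq> v \<longrightarrow> cinner u v = 0)"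

lemma orthonormal_set_independent:
  assumes "orthonormal_set S"
  shows "independent S"
proof
  assume "dependent S"
  then obtain a where a: "a \<in> S" "a \<in> span (S - {a})"
    unfolding dependent_def by blast
  have "span (S - {a}) \<subseteq> {y. cinner a y = 0}"
  proof (rule span_minimal)
    show "S - {a} \<subseteq> {y. cinner a y = 0}"
      using assms a(1) by (auto simp: orthonormal_set_def)
    show "subspace {y. cinner a y = 0}"
      by (simp add: subspace_def cinner_add_right scaleR_vec_eq_smult cinner_scale_right)
  qed
  with a have "cinner a a = 0" by blast
  with a assms show False by (auto simp: orthonormal_set_def)
qed

lemma orthonormal_set_card_le:
  fixes S :: "(complex^'n) set"
  shows "orthonormal_set S \<Longrightarrow> card S \<le> DIM(complex^'n)"
  using independent_bound orthonormal_set_independent by blast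

lemma orthonormal_set_insert:
  assumes "orthonormal_set S" "norm y = 1" "\<And>u. u \<in> S \<Longrightarrow> cinner u y = 0"
  shows "orthonormal_set (insert y S)"
proof -
  have "cinner y u = 0" if "u \<in> S" for u
    using assms(3)[OF that] cnj_cinner[of u y] by simp
  with assms show ?thesis by (auto simp: orthonormal_set_def)
qed

lemma sum_cinner_orthonormal_set:
  assumes "finite S" "orthonormal_set S" "u \<in> S"
  shows "(\<Sum>v\<in>S. c v * cinner u v) = c u"
proof -
  have "(\<Sum>v\<in>S. c v * cinner u v) = c u * cinner u u + (\<Sum>v\<in>S - {u}. c v * cinner u v)"
    using assms by (simp add: sum.remove)
  also have "(\<Sum>v\<in>S - {u}. c v * cinner u v) = 0"
    using assms by (intro sum.neutral) (auto simp: orthonormal_set_def)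
  finally show ?thesis using assms by (simp add: orthonormal_set_def cinner_self)
qed

lemma cinner_orthonormal_set_residual:
  assumes "finite S" "orthonormal_set S" "u \<in> S"
  shows "cinner u (x - (\<Sum>v\<in>S. cinner v x *s v)) = 0"
  using sum_cinner_orthonormal_set[OF assms, of "\<lambda>v. cinner v x"]
  by (simp add: cinner_diff_right cinner_sum_right cinner_scale_right)

lemma hermitian_orthogonal_eigenvector:
  fixes A :: "complex^'n^'n"
  assumes herm: "hermitian_mat A" and eigen: "\<And>u. u \<in> S \<Longrightarrow> \<exists>\<mu>. A *v u = \<mu> *\<^sub>R u"
    and w: "w \<noteq> 0" "\<And>u. u \<in> S \<Longrightarrow> cinner u w = 0"
  obtains y \<mu> where "norm y = 1" "\<And>u. u \<in> S \<Longrightarrow> cinner u y = 0" "A *v y = \<mu> *\<^sub>R y"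
proof -
  define W where "W = {y. \<forall>u\<in>S. cinner u y = 0}"
  have W: "subspace W"
    by (auto simp: subspace_def W_def cinner_add_right scaleR_vec_eq_smult cinner_scale_right)
  have "A *v z \<in> W" if "z \<in> W" for z
  proof -
    have "cinner u (A *v z) = 0" if u: "u \<in> S" for u
    proof -
      obtain \<mu> where "A *v u = \<mu> *\<^sub>R u" using eigen u by blast
      then show ?thesis
        using \<open>z \<in> W\<close> u hermitian_cinner[OF herm, of u z]
        by (simp add: W_def scaleR_vec_eq_smult cinner_scale_left)
    qed
    then show ?thesis by (simp add: W_def)
  qed
  moreover have "w \<in> W" using w by (simp add: W_def)
  ultimately obtain y \<mu> where "y \<in> W" "norm y = 1" "A *v y = \<mu> *\<^sub>R y"
    using hermitian_eigenvector_in_invariant_subspace[OF herm W] w(1) by blast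
  then show thesis using that by (auto simp: W_def)
qed

lemma hermitian_spectral_decomposition:
  fixes A :: "complex^'n^'n"
  assumes herm: "hermitian_mat A"
  obtains S lam where "finite S" "orthonormal_set S" "\<And>u. u \<in> S \<Longrightarrow> A *v u = lam u *\<^sub>R u"
    "\<And>x. x = (\<Sum>u\<in>S. cinner u x *s u)"
proof -
  define orthonormal_eigenvectors where "orthonormal_eigenvectors S \<longleftrightarrow>
    finite S \<and> orthonormal_set S \<and> (\<forall>u\<in>S. \<exists>\<mu>. A *v u = \<mu> *\<^sub>R u)" for S
  have "orthonormal_eigenvectors {}" by (simp add: orthonormal_eigenvectors_def orthonormal_set_def)
  moreover have "\<forall>T. orthonormal_eigenvectors T \<longrightarrow> card T < Suc DIM(complex^'n)"
    using orthonormal_set_card_le by (auto simp: orthonormal_eigenvectors_def less_Suc_eq_le)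
  ultimately obtain S where S: "orthonormal_eigenvectors S"
    and maximal: "\<And>T. orthonormal_eigenvectors T \<Longrightarrow> card T \<le> card S"
    using ex_has_greatest_nat[of orthonormal_eigenvectors] by metis
  have expansion: "x = (\<Sum>u\<in>S. cinner u x *s u)" for x
  proof (rule ccontr)
    define r where "r = x - (\<Sum>u\<in>S. cinner u x *s u)"
    assume "x \<noteq> (\<Sum>u\<in>S. cinner u x *s u)"
    then have "r \<noteq> 0" by (simp add: r_def)
    moreover have "cinner u r = 0" if "u \<in> S" for u
      using S that cinner_orthonormal_set_residual by (auto simp: r_def orthonormal_eigenvectors_def)
    ultimately obtain y \<mu> where y: "norm y = 1" "\<And>u. u \<in> S \<Longrightarrow> cinner u y = 0"
      "A *v y = \<mu> *\<^sub>R y"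
      using hermitian_orthogonal_eigenvector[OF herm] S by (metis orthonormal_eigenvectors_def)
    have "y \<notin> S"
    proof
      assume "y \<in> S"
      then have "cinner y y = 0" by (rule y(2))
      with y(1) show False by (simp add: cinner_self)
    qed
    moreover have "orthonormal_eigenvectors (insert y S)"
      using S y orthonormal_set_insert by (auto simp: orthonormal_eigenvectors_def)
    ultimately show False
      using maximal[of "insert y S"] S by (simp add: orthonormal_eigenvectors_def)
  qed
  define lam where "lam u = (SOME \<mu>. A *v u = \<mu> *\<^sub>R u)" for u
  have "A *v u = lam u *\<^sub>R u" if "u \<in> S" for u
    using S that unfolding lam_def orthonormal_eigenvectors_def by (metis (mono_tags, lifting) someI_ex)
  with S expansion show thesis using that by (auto simp: orthonormal_eigenvectors_def)
qed

section \<open>Positive square roots\<close>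

definition spectral_sum :: "(complex^'n) set \<Rightarrow> (complex^'n \<Rightarrow> complex) \<Rightarrow> complex^'n^'n" where
  "spectral_sum S g = (\<Sum>u\<in>S. \<chi> i j. g u * u $ i * cnj (u $ j))"

lemma spectral_sum_cong:
  "(\<And>u. u \<in> S \<Longrightarrow> g u = h u) \<Longrightarrow> spectral_sum S g = spectral_sum S h"
  unfolding spectral_sum_def by (intro sum.cong) simp_all

lemma spectral_sum_mult_vector:
  fixes x :: "complex^'n"
  shows "spectral_sum S g *v x = (\<Sum>u\<in>S. (g u * cinner u x) *s u)"
proof -
  have "(\<chi> i j. g u * u $ i * cnj (u $ j)) *v x = (g u * cinner u x) *s u" for u
    by (simp add: vec_eq_iff matrix_vector_mult_def cinner_def sum_distrib_left ac_simps)
  moreover have "(\<Sum>u\<in>S. M u) *v x = (\<Sum>u\<in>S. M u *v x)" for M :: "_ \<Rightarrow> complex^'n^'n"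
    by (induct S rule: infinite_finite_induct) (auto simp: matrix_vector_mult_add_rdistrib)
  ultimately show ?thesis unfolding spectral_sum_def by simp
qed

lemma cinner_spectral_sum:
  assumes "finite S" "orthonormal_set S" "v \<in> S"
  shows "cinner v (spectral_sum S g *v x) = g v * cinner v x"
  using sum_cinner_orthonormal_set[OF assms, of "\<lambda>u. g u * cinner u x"]
  by (simp add: spectral_sum_mult_vector cinner_sum_right cinner_scale_right)

lemma spectral_sum_mult:
  assumes "finite S" "orthonormal_set S"
  shows "spectral_sum S g ** spectral_sum S h = spectral_sum S (\<lambda>u. g u * h u)"
proof (subst matrix_eq, intro allI)
  fix x
  have "(spectral_sum S g ** spectral_sum S h) *v x = spectral_sum S g *v (spectral_sum S h *v x)"
    by (simp add: matrix_vector_mul_assoc)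
  also have "\<dots> = spectral_sum S (\<lambda>u. g u * h u) *v x"
    using cinner_spectral_sum[OF assms]
    by (simp add: spectral_sum_mult_vector[of S g] spectral_sum_mult_vector[of S "\<lambda>u. g u * h u"]
        mult.assoc)
  finally show "(spectral_sum S g ** spectral_sum S h) *v x = spectral_sum S (\<lambda>u. g u * h u) *v x" .
qed

lemma pos_semidef_spectral_sum:
  assumes "\<And>u. u \<in> S \<Longrightarrow> f u \<ge> 0"
  shows "pos_semidef_mat (spectral_sum S (\<lambda>u. of_real (f u)))"
  unfolding pos_semidef_mat_def hermitian_iff_cinner
proof (intro conjI allI)
  fix x y
  have "cinner x (spectral_sum S (\<lambda>u. of_real (f u)) *v y)
          = (\<Sum>u\<in>S. of_real (f u) * cinner u y * cnj (cinner u x))"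
    by (simp add: spectral_sum_mult_vector cinner_sum_right cinner_scale_right cnj_cinner)
  also have "\<dots> = cinner (spectral_sum S (\<lambda>u. of_real (f u)) *v x) y"
    by (simp add: spectral_sum_mult_vector cinner_sum_left cinner_scale_left ac_simps)
  finally show "cinner x (spectral_sum S (\<lambda>u. of_real (f u)) *v y)
                  = cinner (spectral_sum S (\<lambda>u. of_real (f u)) *v x) y" .
next
  fix x
  have "qform (spectral_sum S (\<lambda>u. of_real (f u))) x
          = (\<Sum>u\<in>S. of_real (f u) * (cinner u x * cnj (cinner u x)))"
    by (simp add: qform_eq_cinner spectral_sum_mult_vector cinner_sum_right cinner_scale_right
        cnj_cinner mult.assoc)
  then have "Re (qform (spectral_sum S (\<lambda>u. of_real (f u))) x)
               = (\<Sum>u\<in>S. f u * (cmod (cinner u x))\<^sup>2)"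
    by (simp add: complex_mult_cnj cmod_power2)
  also have "\<dots> \<ge> 0" using assms by (intro sum_nonneg) simp
  finally show "Re (qform (spectral_sum S (\<lambda>u. of_real (f u))) x) \<ge> 0" .
qed

lemma eigen_expansion_eq_spectral_sum:
  fixes A :: "complex^'n^'n"
  assumes eigen: "\<And>u. u \<in> S \<Longrightarrow> A *v u = lam u *\<^sub>R u"
    and expansion: "\<And>x. x = (\<Sum>u\<in>S. cinner u x *s u)"
  shows "A = spectral_sum S (\<lambda>u. of_real (lam u))"
proof (subst matrix_eq, intro allI)
  fix x
  have "A *v x = A *v (\<Sum>u\<in>S. cinner u x *s u)" by (simp flip: expansion)
  also have "\<dots> = spectral_sum S (\<lambda>u. of_real (lam u)) *v x"
    by (simp add: matrix_vector_mult_sum matrix_vector_mult_scale eigen spectral_sum_mult_vector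
        scaleR_vec_eq_smult vector_smult_assoc mult.commute)
  finally show "A *v x = spectral_sum S (\<lambda>u. of_real (lam u)) *v x" .
qed

lemma pos_semidef_eigenvalue_nonneg:
  assumes "pos_semidef_mat A" "A *v u = \<mu> *\<^sub>R u" "norm u = 1"
  shows "\<mu> \<ge> 0"
proof -
  have "qform A u = of_real \<mu>"
    using assms by (simp add: qform_eq_cinner scaleR_vec_eq_smult cinner_scale_right cinner_self)
  moreover have "Re (qform A u) \<ge> 0" using assms(1) by (simp add: pos_semidef_mat_def)
  ultimately show ?thesis by simp
qed

lemma pos_semidef_sqrt_exists:
  fixes A :: "complex^'n^'n"
  assumes psd: "pos_semidef_mat A"
  shows "\<exists>B. pos_semidef_mat B \<and> B ** B = A"
proof -
  obtain S lam where S: "finite S" "orthonormal_set S"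
    and eigen: "\<And>u. u \<in> S \<Longrightarrow> A *v u = lam u *\<^sub>R u"
    and expansion: "\<And>x. x = (\<Sum>u\<in>S. cinner u x *s u)"
    using hermitian_spectral_decomposition psd unfolding pos_semidef_mat_def by blast
  have lam: "lam u \<ge> 0" if "u \<in> S" for u
    using that S eigen pos_semidef_eigenvalue_nonneg[OF psd] by (auto simp: orthonormal_set_def)
  define B where "B = spectral_sum S (\<lambda>u. of_real (sqrt (lam u)))"
  have "pos_semidef_mat B"
    unfolding B_def by (rule pos_semidef_spectral_sum) (simp add: lam)
  moreover have "B ** B = A"
  proof -
    have "B ** B = spectral_sum S (\<lambda>u. of_real (sqrt (lam u)) * of_real (sqrt (lam u)))"
      unfolding B_def using S by (rule spectral_sum_mult)
    also have "\<dots> = spectral_sum S (\<lambda>u. of_real (lam u))"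
      using lam by (intro spectral_sum_cong) (simp flip: of_real_mult)
    finally show ?thesis using eigen_expansion_eq_spectral_sum[OF eigen expansion] by simp
  qed
  ultimately show ?thesis by blast
qed

lemma pos_semidef_qform_eq_0:
  assumes psd: "pos_semidef_mat B" and zero: "Re (qform B u) = 0"
  shows "B *v u = 0"
proof -
  obtain R where R: "pos_semidef_mat R" "R ** R = B"
    using pos_semidef_sqrt_exists[OF psd] by blast
  then have "qform B u = cinner (R *v u) (R *v u)"
    by (auto simp: qform_eq_cinner pos_semidef_mat_def hermitian_cinner
        simp flip: matrix_vector_mul_assoc)
  with zero have "R *v u = 0" by (simp add: cinner_self)
  then show ?thesis by (simp add: R(2)[symmetric] flip: matrix_vector_mul_assoc)
qed

lemma pos_semidef_sqrt_diff_eigenvalue_0: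
  fixes B C :: "complex^'n^'n"
  assumes pB: "pos_semidef_mat B" and pC: "pos_semidef_mat C" and sq: "B ** B = C ** C"
    and eigen: "(B - C) *v u = \<mu> *\<^sub>R u" and u: "u \<noteq> 0"
  shows "\<mu> = 0"
proof (rule ccontr)
  assume "\<mu> \<noteq> 0"
  define D where "D = B - C"
  have hD: "hermitian_mat D"
    using pB pC
    by (simp add: D_def hermitian_iff_cinner pos_semidef_mat_def hermitian_cinner
        matrix_vector_mult_diff_rdistrib cinner_diff_left cinner_diff_right)
  have Du: "D *v u = of_real \<mu> *s u" using eigen by (simp add: D_def scaleR_vec_eq_smult)
  have "0 = cinner u (B *v (B *v u)) - cinner u (C *v (C *v u))"
    by (simp add: matrix_vector_mul_assoc sq)
  also have "\<dots> = cinner u (B *v (D *v u)) + cinner u (D *v (C *v u))"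
    by (simp add: D_def matrix_vector_mult_diff_rdistrib matrix_vector_mult_diff_distrib
        cinner_diff_right)
  also have "cinner u (D *v (C *v u)) = of_real \<mu> * qform C u"
    by (simp add: hermitian_cinner[OF hD] Du cinner_scale_left qform_eq_cinner)
  also have "cinner u (B *v (D *v u)) = of_real \<mu> * qform B u"
    by (simp add: Du matrix_vector_mult_scale cinner_scale_right qform_eq_cinner)
  finally have "qform B u + qform C u = 0"
    using \<open>\<mu> \<noteq> 0\<close> by (simp flip: distrib_left)
  moreover have "Re (qform B u) \<ge> 0" "Re (qform C u) \<ge> 0"
    using pB pC by (auto simp: pos_semidef_mat_def)
  ultimately have "Re (qform B u) = 0" "Re (qform C u) = 0"
    by (auto simp: complex_eq_iff)
  then have "B *v u = 0" "C *v u = 0"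
    using pB pC pos_semidef_qform_eq_0 by blast+
  then have "D *v u = 0" by (simp add: D_def matrix_vector_mult_diff_rdistrib)
  with Du u \<open>\<mu> \<noteq> 0\<close> show False by (simp add: vec_eq_iff)
qed

lemma pos_semidef_sqrt_unique:
  fixes B C :: "complex^'n^'n"
  assumes pB: "pos_semidef_mat B" and pC: "pos_semidef_mat C" and sq: "B ** B = C ** C"
  shows "B = C"
proof -
  have "hermitian_mat (B - C)"
    using pB pC
    by (simp add: hermitian_iff_cinner pos_semidef_mat_def hermitian_cinner
        matrix_vector_mult_diff_rdistrib cinner_diff_left cinner_diff_right)
  then obtain S lam where S: "orthonormal_set S"
    and eigen: "\<And>u. u \<in> S \<Longrightarrow> (B - C) *v u = lam u *\<^sub>R u"
    and expansion: "\<And>x. x = (\<Sum>u\<in>S. cinner u x *s u)"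
    using hermitian_spectral_decomposition by blast
  have lam: "lam u = 0" if "u \<in> S" for u
  proof (rule pos_semidef_sqrt_diff_eigenvalue_0[OF pB pC sq eigen[OF that]])
    show "u \<noteq> 0" using S that by (auto simp: orthonormal_set_def)
  qed
  have "B - C = spectral_sum S (\<lambda>u. of_real (lam u))"
    by (rule eigen_expansion_eq_spectral_sum[OF eigen expansion])
  also have "\<dots> = spectral_sum S (\<lambda>_. 0)"
    using lam by (intro spectral_sum_cong) simp
  finally show ?thesis by (simp add: spectral_sum_def vec_eq_iff)
qed

lemma mat_sqrt:
  assumes "pos_semidef_mat A"
  shows "pos_semidef_mat (mat_sqrt A)" "mat_sqrt A ** mat_sqrt A = A"
proof -
  have "\<exists>!B. pos_semidef_mat B \<and> B ** B = A"
    using pos_semidef_sqrt_exists[OF assms] pos_semidef_sqrt_unique by blast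
  then have "pos_semidef_mat (mat_sqrt A) \<and> mat_sqrt A ** mat_sqrt A = A"
    unfolding mat_sqrt_def by (rule theI')
  then show "pos_semidef_mat (mat_sqrt A)" "mat_sqrt A ** mat_sqrt A = A" by auto
qed

lemma mat_sqrt_unique:
  assumes "pos_semidef_mat B" "B ** B = A"
  shows "mat_sqrt A = B"
  unfolding mat_sqrt_def
proof (rule the_equality)
  show "pos_semidef_mat B \<and> B ** B = A" using assms by blast
  show "C = B" if "pos_semidef_mat C \<and> C ** C = A" for C
    using that assms pos_semidef_sqrt_unique by metis
qed

section \<open>Inverses and positive definite matrices\<close>

lemma matrix_inv_right: "invertible A \<Longrightarrow> A ** matrix_inv A = mat 1"
  and matrix_inv_left: "invertible A \<Longrightarrow> matrix_inv A ** A = mat 1"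
  using someI_ex[of "\<lambda>A'. A ** A' = mat 1 \<and> A' ** A = mat 1"]
  unfolding invertible_def matrix_inv_def by auto

lemma right_inverse_imp_invertible:
  fixes A B :: "'a::field^'n^'n"
  shows "A ** B = mat 1 \<Longrightarrow> invertible A"
  using matrix_left_right_inverse unfolding invertible_def by blast

lemma matrix_inv_unique:
  fixes A B :: "'a::field^'n^'n"
  assumes "A ** B = mat 1"
  shows "matrix_inv A = B"
proof -
  have "matrix_inv A = matrix_inv A ** (A ** B)" by (simp add: assms)
  also have "\<dots> = B"
    using right_inverse_imp_invertible[OF assms] by (simp add: matrix_mul_assoc matrix_inv_left)
  finally show ?thesis .
qed

lemma invertible_matrix_inv:
  fixes A :: "'a::field^'n^'n"
  shows "invertible A \<Longrightarrow> invertible (matrix_inv A)"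
  using matrix_inv_left right_inverse_imp_invertible by blast

lemma matrix_inv_matrix_inv:
  fixes A :: "'a::field^'n^'n"
  shows "invertible A \<Longrightarrow> matrix_inv (matrix_inv A) = A"
  using matrix_inv_left matrix_inv_unique by blast

lemma matrix_inv_mult:
  fixes A B :: "'a::field^'n^'n"
  assumes "invertible A" "invertible B"
  shows "matrix_inv (A ** B) = matrix_inv B ** matrix_inv A"
proof (rule matrix_inv_unique)
  have "A ** B ** (matrix_inv B ** matrix_inv A) = A ** (B ** matrix_inv B) ** matrix_inv A"
    by (simp add: matrix_mul_assoc)
  then show "A ** B ** (matrix_inv B ** matrix_inv A) = mat 1"
    using assms by (simp add: matrix_inv_right)
qed

lemma pos_def_imp_pos_semidef: "pos_def_mat A \<Longrightarrow> pos_semidef_mat A"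
  unfolding pos_def_mat_def pos_semidef_mat_def
proof (intro conjI allI; elim conjE)
  fix x
  assume "\<forall>x. x \<noteq> 0 \<longrightarrow> Re (qform A x) > 0"
  then show "Re (qform A x) \<ge> 0"
    by (cases "x = 0") (auto simp: qform_eq_cinner less_imp_le)
qed

lemma pos_def_imp_hermitian: "pos_def_mat A \<Longrightarrow> hermitian_mat A"
  by (simp add: pos_def_mat_def)

lemma pos_def_invertible:
  assumes "pos_def_mat A"
  shows "invertible A"
proof -
  have "x = 0" if "A *v x = 0" for x
    using assms that by (auto simp: pos_def_mat_def qform_eq_cinner)
  then show ?thesis using matrix_left_invertible_ker invertible_left_inverse by blast
qed

lemma pos_semidef_invertible_imp_pos_def:
  fixes A :: "complex^'n^'n"
  assumes psd: "pos_semidef_mat A" and inv: "invertible A"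
  shows "pos_def_mat A"
  unfolding pos_def_mat_def
proof (intro conjI allI impI)
  show "hermitian_mat A" using psd by (simp add: pos_semidef_mat_def)
  fix x :: "complex^'n"
  assume "x \<noteq> 0"
  moreover have "x = matrix_inv A *v (A *v x)"
    using inv by (simp add: matrix_vector_mul_assoc matrix_inv_left)
  ultimately have "A *v x \<noteq> 0" by force
  then have "Re (qform A x) \<noteq> 0" using pos_semidef_qform_eq_0[OF psd] by blast
  with psd show "Re (qform A x) > 0" by (simp add: pos_semidef_mat_def order_less_le)
qed

lemma hermitian_matrix_inv:
  assumes herm: "hermitian_mat A" and inv: "invertible A"
  shows "hermitian_mat (matrix_inv A)"
proof -
  have "adjoint_mat (matrix_inv A) ** A = mat 1"
    using adjoint_mat_mult[of A "matrix_inv A"] herm matrix_inv_right[OF inv]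
    by (simp add: hermitian_mat_def)
  then have "A ** adjoint_mat (matrix_inv A) = mat 1"
    by (simp add: matrix_left_right_inverse)
  then have "matrix_inv A = adjoint_mat (matrix_inv A)"
    by (rule matrix_inv_unique)
  then show ?thesis by (simp add: hermitian_mat_def)
qed

lemma pos_semidef_congruence:
  assumes psd: "pos_semidef_mat A" and herm: "hermitian_mat X"
  shows "pos_semidef_mat (X ** A ** X)"
  unfolding pos_semidef_mat_def
proof (intro conjI allI)
  show "hermitian_mat (X ** A ** X)"
    using herm psd by (simp add: pos_semidef_mat_def hermitian_mat_def adjoint_mat_mult matrix_mul_assoc)
  fix y
  have "qform (X ** A ** X) y = qform A (X *v y)"
    using herm by (simp add: qform_eq_cinner hermitian_cinner flip: matrix_vector_mul_assoc)
  then show "Re (qform (X ** A ** X) y) \<ge> 0" using psd by (simp add: pos_semidef_mat_def)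
qed

lemma pos_def_congruence:
  assumes "pos_def_mat A" "hermitian_mat X" "invertible X"
  shows "pos_def_mat (X ** A ** X)"
proof (rule pos_semidef_invertible_imp_pos_def)
  show "pos_semidef_mat (X ** A ** X)"
    using assms by (intro pos_semidef_congruence pos_def_imp_pos_semidef)
  show "invertible (X ** A ** X)"
    using assms by (simp add: invertible_mult pos_def_invertible)
qed

lemma pos_def_matrix_inv:
  assumes pd: "pos_def_mat A"
  shows "pos_def_mat (matrix_inv A)"
proof -
  have inv: "invertible A" by (rule pos_def_invertible[OF pd])
  then have "matrix_inv A ** A ** matrix_inv A = matrix_inv A"
    by (simp add: matrix_inv_left)
  moreover have "pos_def_mat (matrix_inv A ** A ** matrix_inv A)"
    by (rule pos_def_congruence[OF pd hermitian_matrix_inv[OF pos_def_imp_hermitian[OF pd] inv]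
          invertible_matrix_inv[OF inv]])
  ultimately show ?thesis by simp
qed

lemma pos_def_mat_1: "pos_def_mat (mat 1)"
  by (simp add: pos_def_mat_def hermitian_mat_def qform_eq_cinner cinner_self)

lemma pos_def_convex_comb:
  fixes A B :: "complex^'n^'n"
  assumes A: "pos_def_mat A" and B: "pos_def_mat B" and t: "0 \<le> t" "t \<le> 1"
  shows "pos_def_mat ((1 - t) *\<^sub>R A + t *\<^sub>R B)"
  unfolding pos_def_mat_def
proof (intro conjI allI impI)
  show "hermitian_mat ((1 - t) *\<^sub>R A + t *\<^sub>R B)"
    using A B by (simp add: pos_def_mat_def hermitian_mat_def adjoint_mat_add adjoint_mat_scaleR)
  fix x :: "complex^'n"
  assume "x \<noteq> 0"
  then have "Re (qform A x) > 0" "Re (qform B x) > 0"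
    using A B by (auto simp: pos_def_mat_def)
  moreover have "Re (qform ((1 - t) *\<^sub>R A + t *\<^sub>R B) x) = (1 - t) * Re (qform A x) + t * Re (qform B x)"
    by (simp add: qform_add qform_scaleR)
  ultimately show "Re (qform ((1 - t) *\<^sub>R A + t *\<^sub>R B) x) > 0"
    using t by (smt (verit) mult_nonneg_nonneg mult_pos_pos)
qed

lemma pos_def_mat_sqrt:
  assumes pd: "pos_def_mat A"
  shows "pos_def_mat (mat_sqrt A)"
proof -
  have sq: "mat_sqrt A ** mat_sqrt A = A" by (rule mat_sqrt(2)[OF pos_def_imp_pos_semidef[OF pd]])
  have "mat_sqrt A ** (mat_sqrt A ** matrix_inv A) = mat 1"
    by (simp add: matrix_mul_assoc sq matrix_inv_right pos_def_invertible[OF pd])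
  then show ?thesis
    using pos_semidef_invertible_imp_pos_def mat_sqrt(1) pos_def_imp_pos_semidef[OF pd]
      right_inverse_imp_invertible by blast
qed

lemma mat_sqrt_congruence:
  assumes herm: "hermitian_mat S" and psd: "pos_semidef_mat G" and eq: "G ** (S ** S) ** G = Y"
  shows "mat_sqrt (S ** Y ** S) = S ** G ** S"
proof (rule mat_sqrt_unique)
  show "pos_semidef_mat (S ** G ** S)" by (rule pos_semidef_congruence[OF psd herm])
  show "S ** G ** S ** (S ** G ** S) = S ** Y ** S"
    by (simp add: eq[symmetric] matrix_mul_assoc)
qed

section \<open>Fidelities along the Bures--Wasserstein geodesic\<close>

lemma geo_mean_pos_def:
  assumes "pos_def_mat A" "pos_def_mat B"
  shows "pos_def_mat (geo_mean A B)"
  using assms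
  by (simp add: geo_mean_def Let_def pos_def_congruence pos_def_mat_sqrt pos_def_matrix_inv
      pos_def_imp_hermitian pos_def_invertible)

lemma geo_mean_riccati:
  assumes pA: "pos_def_mat A" and pB: "pos_def_mat B"
  shows "geo_mean A B ** matrix_inv A ** geo_mean A B = B"
proof -
  define H where "H = mat_sqrt A"
  define K where "K = mat_sqrt (matrix_inv H ** B ** matrix_inv H)"
  have pH: "pos_def_mat H" using pA by (simp add: H_def pos_def_mat_sqrt)
  have HH: "H ** H = A" using pA by (simp add: H_def mat_sqrt(2) pos_def_imp_pos_semidef)
  have iH: "invertible H" by (rule pos_def_invertible[OF pH])
  have "pos_def_mat (matrix_inv H ** B ** matrix_inv H)"
    using pB pH iH
    by (simp add: pos_def_congruence pos_def_matrix_inv pos_def_imp_hermitian pos_def_invertible)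
  then have KK: "K ** K = matrix_inv H ** B ** matrix_inv H"
    by (simp add: K_def mat_sqrt(2) pos_def_imp_pos_semidef)
  have "geo_mean A B = H ** K ** H"
    by (simp add: geo_mean_def Let_def H_def K_def)
  moreover have "matrix_inv A = matrix_inv H ** matrix_inv H"
    using matrix_inv_mult[OF iH iH] HH by simp
  ultimately have "geo_mean A B ** matrix_inv A ** geo_mean A B
          = H ** K ** (H ** matrix_inv H) ** (matrix_inv H ** H) ** K ** H"
    by (simp add: matrix_mul_assoc)
  also have "\<dots> = H ** (K ** K) ** H"
    by (simp add: matrix_inv_left[OF iH] matrix_inv_right[OF iH] matrix_mul_assoc)
  also have "\<dots> = (H ** matrix_inv H) ** B ** (matrix_inv H ** H)"
    by (simp add: KK matrix_mul_assoc)
  also have "\<dots> = B" by (simp add: matrix_inv_left[OF iH] matrix_inv_right[OF iH])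
  finally show ?thesis .
qed

lemma matrix_add_rdistrib: "(A + B) ** C = A ** C + B ** C"
  by (simp add: matrix_matrix_mult_def vec_eq_iff distrib_right sum.distrib)

lemma matrix_inv_mult_affine:
  fixes T :: "'a::real_field^'n^'n"
  assumes "invertible T"
  shows "matrix_inv T ** ((1 - t) *\<^sub>R mat 1 + t *\<^sub>R T) = (1 - t) *\<^sub>R matrix_inv T + t *\<^sub>R mat 1"
    and "((1 - t) *\<^sub>R mat 1 + t *\<^sub>R T) ** matrix_inv T = (1 - t) *\<^sub>R matrix_inv T + t *\<^sub>R mat 1"
  using assms
  by (simp_all add: matrix_add_ldistrib matrix_add_rdistrib matrix_scalar_ac
      flip: scalar_matrix_assoc add: matrix_inv_left matrix_inv_right)

lemma gen_fidelity_congruence: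
  assumes pR: "pos_def_mat R" and pM: "pos_semidef_mat M" and pN: "pos_semidef_mat N"
    and P: "P = M ** R ** M" and Q: "Q = N ** R ** N"
  shows "gen_fidelity R P Q = trace (R ** M ** N)"
proof -
  define S where "S = mat_sqrt R"
  have pS: "pos_def_mat S" using pR by (simp add: S_def pos_def_mat_sqrt)
  have SS: "S ** S = R" using pR by (simp add: S_def mat_sqrt(2) pos_def_imp_pos_semidef)
  have iS: "invertible S" by (rule pos_def_invertible[OF pS])
  have "mat_sqrt (S ** P ** S) = S ** M ** S"
    using pS pM by (intro mat_sqrt_congruence) (simp_all add: pos_def_imp_hermitian P SS)
  moreover have "mat_sqrt (S ** Q ** S) = S ** N ** S"
    using pS pN by (intro mat_sqrt_congruence) (simp_all add: pos_def_imp_hermitian Q SS)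
  moreover have "matrix_inv R = matrix_inv S ** matrix_inv S"
    using matrix_inv_mult[OF iS iS] SS by simp
  ultimately have "gen_fidelity R P Q
      = trace (S ** M ** (S ** matrix_inv S) ** (matrix_inv S ** S) ** N ** S)"
    by (simp add: gen_fidelity_def S_def[symmetric] matrix_mul_assoc)
  also have "\<dots> = trace ((S ** M ** N) ** S)"
    by (simp add: matrix_inv_left[OF iS] matrix_inv_right[OF iS] matrix_mul_assoc)
  also have "\<dots> = trace (S ** (S ** M ** N))"
    by (rule trace_mul_sym)
  also have "\<dots> = trace (R ** M ** N)"
    by (simp add: SS matrix_mul_assoc)
  finally show ?thesis .
qed

lemma uhlmann_fidelity_congruence:
  assumes pP: "pos_semidef_mat P" and pX: "pos_semidef_mat X" and Q: "Q = X ** P ** X"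
  shows "uhlmann_fidelity P Q = trace (P ** X)"
proof -
  define H where "H = mat_sqrt P"
  have HH: "H ** H = P" using pP by (simp add: H_def mat_sqrt(2))
  have "hermitian_mat H" using mat_sqrt(1)[OF pP] by (simp add: H_def pos_semidef_mat_def)
  then have "mat_sqrt (H ** Q ** H) = H ** X ** H"
    using pX by (rule mat_sqrt_congruence) (simp add: Q HH)
  then have "uhlmann_fidelity P Q = trace ((H ** X) ** H)"
    by (simp add: uhlmann_fidelity_def H_def[symmetric])
  also have "\<dots> = trace (H ** (H ** X))"
    by (rule trace_mul_sym)
  also have "\<dots> = trace (P ** X)"
    by (simp add: HH matrix_mul_assoc)
  finally show ?thesis .
qed

lemma matrix_inv_congruence:
  fixes A X :: "'a::field^'n^'n"
  assumes "invertible X" "invertible A"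
  shows "matrix_inv (X ** A ** X) = matrix_inv X ** matrix_inv A ** matrix_inv X"
  using assms by (simp add: matrix_inv_mult invertible_mult matrix_mul_assoc)

lemma geo_mean_inverse_riccati:
  assumes pP: "pos_def_mat P" and pQ: "pos_def_mat Q"
  defines "T \<equiv> geo_mean P (matrix_inv Q)"
  shows "Q = matrix_inv T ** P ** matrix_inv T"
proof -
  have "T ** matrix_inv P ** T = matrix_inv Q"
    unfolding T_def using pP pQ by (simp add: geo_mean_riccati pos_def_matrix_inv)
  then have "Q = matrix_inv (T ** matrix_inv P ** T)"
    using pQ by (simp add: matrix_inv_matrix_inv pos_def_invertible)
  also have "\<dots> = matrix_inv T ** P ** matrix_inv T"
    using pP pQ
    by (simp add: T_def matrix_inv_congruence matrix_inv_matrix_inv invertible_matrix_inv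
        pos_def_invertible geo_mean_pos_def pos_def_matrix_inv)
  finally show ?thesis .
qed

lemma matrix_inv_bw_geodesic_inverses:
  fixes P M :: "complex^'n^'n"
  assumes pP: "pos_def_mat P" and M: "M = (1 - t) *\<^sub>R mat 1 + t *\<^sub>R geo_mean P B"
    and iM: "invertible M"
  shows "matrix_inv (bw_geodesic (matrix_inv P) B t) = matrix_inv M ** P ** matrix_inv M"
  using pP iM
  by (simp add: bw_geodesic_def Let_def matrix_inv_matrix_inv pos_def_invertible
      matrix_inv_congruence invertible_matrix_inv flip: M)

lemma mixture_congruence:
  fixes P T M N R :: "'a::real_field^'n^'n" and t :: real
  assumes M_def: "M = (1 - t) *\<^sub>R mat 1 + t *\<^sub>R T"
    and N_def: "N = (1 - t) *\<^sub>R matrix_inv T + t *\<^sub>R mat 1"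
    and R_def: "R = matrix_inv M ** P ** matrix_inv M"
    and iT: "invertible T" and iM: "invertible M"
  shows "P = M ** R ** M"
    and "matrix_inv T ** P ** matrix_inv T = N ** R ** N"
    and "trace (R ** M ** N) = trace (P ** matrix_inv T)"
proof -
  have N: "N = matrix_inv T ** M" "N = M ** matrix_inv T"
    using matrix_inv_mult_affine[OF iT] by (simp_all add: M_def N_def)
  have "M ** R ** M = (M ** matrix_inv M) ** P ** (matrix_inv M ** M)"
    by (simp only: R_def matrix_mul_assoc)
  then show "P = M ** R ** M" by (simp add: matrix_inv_left[OF iM] matrix_inv_right[OF iM])
  have "N ** R ** N
          = matrix_inv T ** (M ** matrix_inv M) ** P ** (matrix_inv M ** M) ** matrix_inv T"
    by (subst (1) N(1), subst N(2)) (simp only: R_def matrix_mul_assoc)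
  then show "matrix_inv T ** P ** matrix_inv T = N ** R ** N"
    by (simp add: matrix_inv_left[OF iM] matrix_inv_right[OF iM])
  have "R ** M ** N = matrix_inv M ** (P ** (matrix_inv M ** M) ** matrix_inv T ** M)"
    by (simp only: R_def N(1) matrix_mul_assoc)
  also have "\<dots> = matrix_inv M ** (P ** matrix_inv T ** M)"
    by (simp add: matrix_inv_left[OF iM])
  also have "trace \<dots> = trace ((P ** matrix_inv T ** M) ** matrix_inv M)"
    by (rule trace_mul_sym)
  also have "\<dots> = trace (P ** matrix_inv T ** (M ** matrix_inv M))"
    by (simp only: matrix_mul_assoc)
  finally show "trace (R ** M ** N) = trace (P ** matrix_inv T)"
    by (simp add: matrix_inv_right[OF iM])
qed

theorem mainTheorem5:
  fixes P Q :: "complex^'d^'d" and t :: real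
  assumes "pos_def_mat P" and "pos_def_mat Q" and "0 \<le> t" and "t \<le> 1"
  shows "gen_fidelity (matrix_inv (bw_geodesic (matrix_inv P) (matrix_inv Q) t)) P Q
           = uhlmann_fidelity P Q"
proof -
  note pP = assms(1) and pQ = assms(2) and t = assms(3,4)
  define T where "T = geo_mean P (matrix_inv Q)"
  define M where "M = (1 - t) *\<^sub>R mat 1 + t *\<^sub>R T"
  define N where "N = (1 - t) *\<^sub>R matrix_inv T + t *\<^sub>R mat 1"
  define R where "R = matrix_inv M ** P ** matrix_inv M"
  have pT: "pos_def_mat T" using pP pQ by (simp add: T_def geo_mean_pos_def pos_def_matrix_inv)
  have pM: "pos_def_mat M" using pT t by (simp add: M_def pos_def_convex_comb pos_def_mat_1)
  have pN: "pos_def_mat N"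
    using pT t by (simp add: N_def pos_def_convex_comb pos_def_mat_1 pos_def_matrix_inv)
  have iT: "invertible T" and iM: "invertible M" using pT pM by (simp_all add: pos_def_invertible)
  have "matrix_inv (bw_geodesic (matrix_inv P) (matrix_inv Q) t) = R"
    unfolding R_def using pP M_def[unfolded T_def] iM by (rule matrix_inv_bw_geodesic_inverses)
  moreover have "pos_def_mat R"
    using pP pM
    by (simp add: R_def pos_def_congruence pos_def_matrix_inv pos_def_imp_hermitian pos_def_invertible)
  then have "gen_fidelity R P Q = trace (R ** M ** N)"
    using mixture_congruence[OF M_def N_def R_def iT iM]
      geo_mean_inverse_riccati[OF pP pQ, folded T_def] pM pN
    by (intro gen_fidelity_congruence) (simp_all add: pos_def_imp_pos_semidef)
  moreover have "uhlmann_fidelity P Q = trace (P ** matrix_inv T)"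
    using geo_mean_inverse_riccati[OF pP pQ, folded T_def] pP pT
    by (intro uhlmann_fidelity_congruence) (simp_all add: pos_def_imp_pos_semidef pos_def_matrix_inv)
  ultimately show ?thesis
    using mixture_congruence(3)[OF M_def N_def R_def iT iM] by simp
qed

end
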